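(* Let $(\mathcal C,\mathcal D,O,\vec z,v)$ be a configuration for $(F,f)$, let $C$ be a PB constraint, and suppose there is a substitution $\omega$ such that $$\mathcal C\cup\mathcal D\cup\{f\le v-1\}\cup\{\neg C\}\ \vdash\ (\mathcal C\cup\mathcal D\cup\{C\})|_\omega\ \cup\ \{f|_\omega\le f\}\ \cup\ O(\vec z|_\omega,\vec z).$$ If $(\mathcal C,\mathcal D,O,\vec z,v)$ is weakly valid, then $(\mathcal C,\mathcal D\cup\{C\},O,\vec z,v)$ is weakly valid; if it is valid, then $(\mathcal C,\mathcal D\cup\{C\},O,\vec z,v)$ is valid.
   Context: Boolean variables take values in $\{0,1\}$; a literal is a variable $x$ or $\bar x=1-x$. A PB constraint is $C:\ \sum_i a_i\ell_i\ge A$ with integer $a_i,A$; its negation $\neg C$ is $\sum_i -a_i\ell_i\ge -A+1$. A total assignment $\alpha$ satisfies $C$ if $\sum_i a_i\alpha(\ell_i)\ge A$. A PB formula is a finite set of PB constraints. A substitution $\omega$ maps variables to literals or to $\{0,1\}$ (identity outside its domain, extended to literals by $\omega(\bar x)=\overline{\omega(x)}$); $C|_\omega$ replaces each $\ell_i$ by $\omega(\ell_i)$, $G|_\omega=\{D|_\omega: D\in G\}$, and for a total assignment $\alpha$, $\alpha\circ\omega$ is $x\mapsto\alpha(\omega(x))$. An objective is $f=\sum_i w_i\ell_i$ with integer $w_i$; $f|_\omega=\sum_i w_i\omega(\ell_i)$; $f\le k$ and $f|_\omega\le f$ are read as PB constraints, and for $k=\infty$ the constraints $f\le\infty$, $f\le\infty-1$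 are trivially true (empty). $G\vdash D$ means $D$ is derivable from $G$ in the cutting planes system (axioms from $G$, literal axioms $\ell\ge0$, positive integer linear combinations, division of a constraint with nonnegative coefficients by a positive integer rounding coefficients and degree up), where additionally $G\vdash D$ whenever $0\ge1$ is so derivable from $G\cup\{\neg D\}$; $G\vdash H$ for a set $H$ means $G\vdash D$ for all $D\in H$. This derivability is sound (every total assignment satisfying $G$ satisfies $D$). A preorder encoding is a PB formula $O(\vec u,\vec v)$ over two lists of $n$ placeholder variables with a list $\vec z=(z_1,\dots,z_n)$ of variables, such that $\alpha\preceq\beta$ iff $O(\vec z|_\alpha,\vec z|_\beta)$ is true is reflexive and transitive; here $O(\vec z|_\alpha,\vec z|_\beta)$ is $O$ with $u_i$ replaced by $\alpha(z_i)$ and $v_i$ by $\beta(z_i)$, so $O(\vec z|_\omega,\vec z)$ replaces $u_i$ by $\omega(z_i)$ and $v_i$ by $z_i$. $\alpha\preceq_f\beta$ iff $\alpha\preceq\beta$ and $f(\alpha)\le f(\beta)$. Fix input $F$ and objective $f$. A configuration $(\mathcal C,\mathcal D,O,\vec z,v)$ has PB sets $\mathcal C,\mathcal D$, a preorder encoding, and $v\in\mathbb Z\cup\{\infty\}$. It is weakly valid if (1) for every integer $v'<v$, satisfiability of $F\cup\{f\le v'\}$ implies satisfiability of $\mathcal C\cup\{f\le v'\}$; (2) every total $\rho$ satisfying $\mathcal C\cup\{f\le v-1\}$ admits a total $\rho'\preceq_f\rho$ satisfying $\mathcal C\cup\mathcal D\cup\{f\le v-1\}$. It is valid if also (3) $v<\infty$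 implies $F\cup\{f\le v\}$ satisfiable; (4) for every integer $v'<v$, satisfiability of $\mathcal C\cup\{f\le v'\}$ implies satisfiability of $F\cup\{f\le v'\}$. *)

theory Defs
  imports Main
begin

datatype 'v lit = Pos 'v | Neg 'v

text \<open>Image of a literal under a substitution: a literal or a constant in {0,1}.\<close>
datatype 'v slit = L "'v lit" | K bool

datatype 'v pbc = PBC "(int \<times> 'v lit) list" int

fun var :: "'v lit \<Rightarrow> 'v" where
  "var (Pos x) = x" | "var (Neg x) = x"

fun neg_lit :: "'v lit \<Rightarrow> 'v lit" where
  "neg_lit (Pos x) = Neg x" | "neg_lit (Neg x) = Pos x"

fun lit_val :: "('v \<Rightarrow> bool) \<Rightarrow> 'v lit \<Rightarrow> int" where
  "lit_val \<alpha> (Pos x) = of_bool (\<alpha> x)"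
| "lit_val \<alpha> (Neg x) = 1 - of_bool (\<alpha> x)"

definition lhs :: "('v \<Rightarrow> bool) \<Rightarrow> (int \<times> 'v lit) list \<Rightarrow> int" where
  "lhs \<alpha> ts = (\<Sum>(a, l)\<leftarrow>ts. a * lit_val \<alpha> l)"

fun sat :: "('v \<Rightarrow> bool) \<Rightarrow> 'v pbc \<Rightarrow> bool" where
  "sat \<alpha> (PBC ts A) = (lhs \<alpha> ts \<ge> A)"

definition sat_set :: "('v \<Rightarrow> bool) \<Rightarrow> 'v pbc set \<Rightarrow> bool" where
  "sat_set \<alpha> G = (\<forall>C\<in>G. sat \<alpha> C)"

definition satisfiable :: "'v pbc set \<Rightarrow> bool" where
  "satisfiable G = (\<exists>\<alpha>. sat_set \<alpha> G)"

fun neg :: "'v pbc \<Rightarrow> 'v pbc" where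
  "neg (PBC ts A) = PBC (map (\<lambda>(a, l). (-a, l)) ts) (-A + 1)"

fun vars :: "'v pbc \<Rightarrow> 'v set" where
  "vars (PBC ts A) = {var l | a l. (a, l) \<in> set ts}"

text \<open>A substitution is a total map from variables to literals/constants
  (identity outside its domain is represented by mapping x to L (Pos x)).\<close>

fun neg_slit :: "'v slit \<Rightarrow> 'v slit" where
  "neg_slit (L l) = L (neg_lit l)" | "neg_slit (K b) = K (\<not> b)"

fun subst_lit :: "('a \<Rightarrow> 'b slit) \<Rightarrow> 'a lit \<Rightarrow> 'b slit" where
  "subst_lit \<omega> (Pos x) = \<omega> x"
| "subst_lit \<omega> (Neg x) = neg_slit (\<omega> x)"

definition subst_lits :: "('a \<Rightarrow> 'b slit) \<Rightarrow> (int \<times> 'a lit) list \<Rightarrow> (int \<times> 'b lit) list" where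
  "subst_lits \<omega> ts = concat (map (\<lambda>(a, l). case subst_lit \<omega> l of L l' \<Rightarrow> [(a, l')] | K _ \<Rightarrow> []) ts)"

definition subst_const :: "('a \<Rightarrow> 'b slit) \<Rightarrow> (int \<times> 'a lit) list \<Rightarrow> int" where
  "subst_const \<omega> ts = (\<Sum>(a, l)\<leftarrow>ts. case subst_lit \<omega> l of L _ \<Rightarrow> 0 | K b \<Rightarrow> a * of_bool b)"

fun subst_pbc :: "('a \<Rightarrow> 'b slit) \<Rightarrow> 'a pbc \<Rightarrow> 'b pbc" where
  "subst_pbc \<omega> (PBC ts A) = PBC (subst_lits \<omega> ts) (A - subst_const \<omega> ts)"

definition subst_set :: "('a \<Rightarrow> 'b slit) \<Rightarrow> 'a pbc set \<Rightarrow> 'b pbc set" where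
  "subst_set \<omega> G = subst_pbc \<omega> ` G"

type_synonym 'v obj = "(int \<times> 'v lit) list"

definition obj_val :: "('v \<Rightarrow> bool) \<Rightarrow> 'v obj \<Rightarrow> int" where
  "obj_val \<alpha> f = lhs \<alpha> f"

definition obj_le :: "'v obj \<Rightarrow> int \<Rightarrow> 'v pbc" where
  "obj_le f k = PBC (map (\<lambda>(w, l). (-w, l)) f) (-k)"

text \<open>Extended integers Z \<union> {\<infinity>}: None stands for \<infinity>.\<close>
type_synonym eint = "int option"

definition eint_dec :: "eint \<Rightarrow> eint" where
  "eint_dec v = map_option (\<lambda>k. k - 1) v"

definition eint_less :: "int \<Rightarrow> eint \<Rightarrow> bool" where
  "eint_less k v = (case v of None \<Rightarrow> True | Some m \<Rightarrow> k < m)"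

definition obj_le_ext :: "'v obj \<Rightarrow> eint \<Rightarrow> 'v pbc set" where
  "obj_le_ext f v = (case v of None \<Rightarrow> {} | Some k \<Rightarrow> {obj_le f k})"

definition obj_subst_le :: "('v \<Rightarrow> 'v slit) \<Rightarrow> 'v obj \<Rightarrow> 'v pbc" where
  "obj_subst_le \<omega> f = PBC (f @ map (\<lambda>(w, l). (-w, l)) (subst_lits \<omega> f)) (subst_const \<omega> f)"

text \<open>Placeholder variables: (False, i) is u_i and (True, i) is v_i.\<close>
type_synonym penc = "(bool \<times> nat) pbc set"

definition enc_holds :: "penc \<Rightarrow> 'v list \<Rightarrow> ('v \<Rightarrow> bool) \<Rightarrow> ('v \<Rightarrow> bool) \<Rightarrow> bool" where
  "enc_holds Oenc z \<alpha> \<beta> = sat_set (\<lambda>(b, i). if b then \<beta> (z ! i) else \<alpha> (z ! i)) Oenc"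

definition is_preorder_encoding :: "penc \<Rightarrow> 'v list \<Rightarrow> bool" where
  "is_preorder_encoding Oenc z \<longleftrightarrow>
     finite Oenc \<and> (\<forall>C\<in>Oenc. vars C \<subseteq> {(b, i). i < length z}) \<and>
     (\<forall>\<alpha>. enc_holds Oenc z \<alpha> \<alpha>) \<and>
     (\<forall>\<alpha> \<beta> \<gamma>. enc_holds Oenc z \<alpha> \<beta> \<longrightarrow> enc_holds Oenc z \<beta> \<gamma> \<longrightarrow> enc_holds Oenc z \<alpha> \<gamma>)"

definition preceq_f :: "penc \<Rightarrow> 'v list \<Rightarrow> 'v obj \<Rightarrow> ('v \<Rightarrow> bool) \<Rightarrow> ('v \<Rightarrow> bool) \<Rightarrow> bool" where
  "preceq_f Oenc z f \<alpha> \<beta> \<longleftrightarrow> enc_holds Oenc z \<alpha> \<beta> \<and> obj_val \<alpha> f \<le> obj_val \<beta> f"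

definition enc_subst :: "penc \<Rightarrow> 'v list \<Rightarrow> ('v \<Rightarrow> 'v slit) \<Rightarrow> 'v pbc set" where
  "enc_subst Oenc z \<omega> = subst_set (\<lambda>(b, i). if b then L (Pos (z ! i)) else \<omega> (z ! i)) Oenc"

text \<open>Normal form over variables: coefficient map c and degree d, meaning sum_x c x * x >= d.\<close>
fun norm :: "'v pbc \<Rightarrow> ('v \<Rightarrow> int) \<times> int" where
  "norm (PBC ts A) =
     ((\<lambda>x. \<Sum>(a, l)\<leftarrow>ts. (case l of Pos y \<Rightarrow> if y = x then a else 0
                                   | Neg y \<Rightarrow> if y = x then -a else 0)),
      A - (\<Sum>(a, l)\<leftarrow>ts. (case l of Neg _ \<Rightarrow> a | Pos _ \<Rightarrow> 0)))"

definition ceil_div :: "int \<Rightarrow> int \<Rightarrow> int" where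
  "ceil_div a k = - ((- a) div k)"

text \<open>Division: write the constraint with nonnegative coefficients over literals
  (x for c x > 0, negated x for c x < 0), divide coefficients and degree by k rounding up,
  and translate back to the variable normal form.\<close>
inductive cp :: "'v pbc set \<Rightarrow> ('v \<Rightarrow> int) \<times> int \<Rightarrow> bool" for G where
  cp_ax: "C \<in> G \<Longrightarrow> cp G (norm C)"
| cp_pos: "cp G ((\<lambda>y. if y = x then 1 else 0), 0)"
| cp_negl: "cp G ((\<lambda>y. if y = x then -1 else 0), -1)"
| cp_add: "cp G (c, d) \<Longrightarrow> cp G (c', d') \<Longrightarrow> cp G ((\<lambda>x. c x + c' x), d + d')"
| cp_mult: "cp G (c, d) \<Longrightarrow> (k::int) > 0 \<Longrightarrow> cp G ((\<lambda>x. k * c x), k * d)"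
| cp_div: "cp G (c, d) \<Longrightarrow> (k::int) > 0 \<Longrightarrow>
     cp G ((\<lambda>x. sgn (c x) * ceil_div \<bar>c x\<bar> k),
           ceil_div (d + (\<Sum>x\<in>{x. c x < 0}. - c x)) k - (\<Sum>x\<in>{x. c x < 0}. ceil_div (- c x) k))"

definition derives :: "'v pbc set \<Rightarrow> 'v pbc \<Rightarrow> bool" where
  "derives G D \<longleftrightarrow> cp G (norm D) \<or> cp (G \<union> {neg D}) ((\<lambda>_. 0), 1)"

definition derives_set :: "'v pbc set \<Rightarrow> 'v pbc set \<Rightarrow> bool" where
  "derives_set G H \<longleftrightarrow> (\<forall>D\<in>H. derives G D)"

definition weakly_valid ::
  "'v pbc set \<Rightarrow> 'v obj \<Rightarrow> 'v pbc set \<Rightarrow> 'v pbc set \<Rightarrow> penc \<Rightarrow> 'v list \<Rightarrow> eint \<Rightarrow> bool" where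
  "weakly_valid F f \<C> \<D> Oenc z v \<longleftrightarrow>
     (\<forall>v'. eint_less v' v \<longrightarrow> satisfiable (F \<union> {obj_le f v'}) \<longrightarrow> satisfiable (\<C> \<union> {obj_le f v'})) \<and>
     (\<forall>\<rho>. sat_set \<rho> (\<C> \<union> obj_le_ext f (eint_dec v)) \<longrightarrow>
        (\<exists>\<rho>'. preceq_f Oenc z f \<rho>' \<rho> \<and> sat_set \<rho>' (\<C> \<union> \<D> \<union> obj_le_ext f (eint_dec v))))"

definition valid ::
  "'v pbc set \<Rightarrow> 'v obj \<Rightarrow> 'v pbc set \<Rightarrow> 'v pbc set \<Rightarrow> penc \<Rightarrow> 'v list \<Rightarrow> eint \<Rightarrow> bool" where
  "valid F f \<C> \<D> Oenc z v \<longleftrightarrow>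
     weakly_valid F f \<C> \<D> Oenc z v \<and>
     (v \<noteq> None \<longrightarrow> satisfiable (F \<union> obj_le_ext f v)) \<and>
     (\<forall>v'. eint_less v' v \<longrightarrow> satisfiable (\<C> \<union> {obj_le f v'}) \<longrightarrow> satisfiable (F \<union> {obj_le f v'}))"

end

theory Submission
  imports Defs
begin

text \<open>Cutting planes derivations are sound, so an assignment \<open>\<rho>\<close> that satisfies \<open>\<C> \<union> \<D>\<close> and the
  objective bound but violates \<open>C\<close> satisfies the derived set. Read through \<open>\<rho> \<circ> \<omega>\<close>, this says that
  \<open>\<rho> \<circ> \<omega>\<close> satisfies \<open>\<C> \<union> \<D> \<union> {C}\<close>, has objective value at most \<open>f(\<rho>)\<close> (hence keeps the bound)
  and lies below \<open>\<rho>\<close> in the preorder. Chaining this witness after the one provided by the old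
  configuration, using transitivity of \<open>\<preceq>\<^sub>f\<close>, gives condition (2) for the new configuration; the
  other conditions do not mention \<open>\<D>\<close>.\<close>

lemma lit_val_cases: "lit_val \<alpha> l = 0 \<or> lit_val \<alpha> l = 1"
  by (cases l) auto

lemma lit_val_neg_lit [simp]: "lit_val \<alpha> (neg_lit l) = 1 - lit_val \<alpha> l"
  by (cases l) auto

lemma lhs_Nil [simp]: "lhs \<alpha> [] = 0"
  by (simp add: lhs_def)

lemma lhs_Cons [simp]: "lhs \<alpha> ((a, l) # ts) = a * lit_val \<alpha> l + lhs \<alpha> ts"
  by (simp add: lhs_def)

lemma lhs_append [simp]: "lhs \<alpha> (xs @ ys) = lhs \<alpha> xs + lhs \<alpha> ys"
  by (simp add: lhs_def)

lemma lhs_map_uminus [simp]: "lhs \<alpha> (map (\<lambda>(a, l). (- a, l)) ts) = - lhs \<alpha> ts"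
  by (induction ts) auto

lemma sat_neg_iff: "sat \<alpha> (neg D) \<longleftrightarrow> \<not> sat \<alpha> D"
  by (cases D) auto

lemma sat_obj_le_iff: "sat \<alpha> (obj_le f k) \<longleftrightarrow> obj_val \<alpha> f \<le> k"
  by (auto simp: obj_le_def obj_val_def)

lemma sat_set_empty [simp]: "sat_set \<alpha> {}"
  by (simp add: sat_set_def)

lemma sat_set_insert_iff [simp]: "sat_set \<alpha> (insert D G) \<longleftrightarrow> sat \<alpha> D \<and> sat_set \<alpha> G"
  by (simp add: sat_set_def)

lemma sat_set_Un_iff [simp]: "sat_set \<alpha> (G \<union> H) \<longleftrightarrow> sat_set \<alpha> G \<and> sat_set \<alpha> H"
  by (auto simp: sat_set_def)

lemma sat_set_obj_le_ext_mono:
  assumes "obj_val \<alpha> f \<le> obj_val \<beta> f" and "sat_set \<beta> (obj_le_ext f w)"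
  shows "sat_set \<alpha> (obj_le_ext f w)"
  using assms by (cases w) (auto simp: obj_le_ext_def sat_obj_le_iff)

fun slit_val :: "('v \<Rightarrow> bool) \<Rightarrow> 'v slit \<Rightarrow> int" where
  "slit_val \<alpha> (L l) = lit_val \<alpha> l"
| "slit_val \<alpha> (K b) = of_bool b"

definition subst_asg :: "('b \<Rightarrow> bool) \<Rightarrow> ('a \<Rightarrow> 'b slit) \<Rightarrow> 'a \<Rightarrow> bool" where
  "subst_asg \<alpha> \<omega> x \<longleftrightarrow> slit_val \<alpha> (\<omega> x) = 1"

lemma slit_val_cases: "slit_val \<alpha> s = 0 \<or> slit_val \<alpha> s = 1"
  by (cases s) (auto simp: lit_val_cases)

lemma slit_val_neg_slit [simp]: "slit_val \<alpha> (neg_slit s) = 1 - slit_val \<alpha> s"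
  by (cases s) auto

lemma slit_val_subst_lit: "slit_val \<alpha> (subst_lit \<omega> l) = lit_val (subst_asg \<alpha> \<omega>) l"
  using slit_val_cases[of \<alpha> "\<omega> (var l)"] by (cases l) (auto simp: subst_asg_def)

lemma lhs_subst_lits:
  "lhs \<alpha> (subst_lits \<omega> ts) + subst_const \<omega> ts = lhs (subst_asg \<alpha> \<omega>) ts"
proof (induction ts)
  case Nil
  show ?case by (simp add: subst_lits_def subst_const_def)
next
  case (Cons t ts)
  obtain a l where t: "t = (a, l)" by fastforce
  have "lhs \<alpha> (subst_lits \<omega> (t # ts)) + subst_const \<omega> (t # ts)
      = a * slit_val \<alpha> (subst_lit \<omega> l) + (lhs \<alpha> (subst_lits \<omega> ts) + subst_const \<omega> ts)"
    by (cases "subst_lit \<omega> l") (simp_all add: t subst_lits_def subst_const_def)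
  then show ?case by (simp add: Cons.IH t slit_val_subst_lit)
qed

lemma sat_subst_pbc_iff: "sat \<alpha> (subst_pbc \<omega> C) \<longleftrightarrow> sat (subst_asg \<alpha> \<omega>) C"
proof (cases C)
  case (PBC ts A)
  then show ?thesis using lhs_subst_lits[of \<alpha> \<omega> ts] by simp linarith
qed

lemma sat_set_subst_set_iff: "sat_set \<alpha> (subst_set \<omega> G) \<longleftrightarrow> sat_set (subst_asg \<alpha> \<omega>) G"
  by (simp add: sat_set_def subst_set_def sat_subst_pbc_iff)

lemma sat_obj_subst_le_iff:
  "sat \<alpha> (obj_subst_le \<omega> f) \<longleftrightarrow> obj_val (subst_asg \<alpha> \<omega>) f \<le> obj_val \<alpha> f"
  using lhs_subst_lits[of \<alpha> \<omega> f] by (auto simp: obj_subst_le_def obj_val_def)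

lemma sat_set_enc_subst_iff:
  "sat_set \<alpha> (enc_subst Oenc z \<omega>) \<longleftrightarrow> enc_holds Oenc z (subst_asg \<alpha> \<omega>) \<alpha>"
proof -
  have "subst_asg \<alpha> (\<lambda>(b, i). if b then L (Pos (z ! i)) else \<omega> (z ! i))
      = (\<lambda>(b, i). if b then \<alpha> (z ! i) else subst_asg \<alpha> \<omega> (z ! i))"
    by (auto simp: subst_asg_def fun_eq_iff)
  then show ?thesis
    by (simp add: enc_subst_def sat_set_subst_set_iff enc_holds_def)
qed

section \<open>Soundness of cutting planes\<close>

text \<open>The value of \<open>\<Sum>\<^sub>x c x \<cdot> x\<close>; meaningful only for finitely supported \<open>c\<close>.\<close>
definition lin_val :: "('v \<Rightarrow> bool) \<Rightarrow> ('v \<Rightarrow> int) \<Rightarrow> int" where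
  "lin_val \<alpha> c = (\<Sum>x | c x \<noteq> 0. c x * of_bool (\<alpha> x))"

lemma lin_val_superset:
  assumes "finite S" and "{x. c x \<noteq> 0} \<subseteq> S"
  shows "lin_val \<alpha> c = (\<Sum>x\<in>S. c x * of_bool (\<alpha> x))"
  unfolding lin_val_def by (rule sum.mono_neutral_left) (use assms in auto)

lemma lin_val_add:
  assumes "finite {x. c x \<noteq> 0}" and "finite {x. c' x \<noteq> 0}"
  shows "lin_val \<alpha> (\<lambda>x. c x + c' x) = lin_val \<alpha> c + lin_val \<alpha> c'"
proof -
  let ?S = "{x. c x \<noteq> 0} \<union> {x. c' x \<noteq> 0}"
  have fin: "finite ?S" using assms by simp
  have "lin_val \<alpha> (\<lambda>x. c x + c' x) = (\<Sum>x\<in>?S. (c x + c' x) * of_bool (\<alpha> x))"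
    by (rule lin_val_superset[OF fin]) auto
  moreover have "lin_val \<alpha> c = (\<Sum>x\<in>?S. c x * of_bool (\<alpha> x))"
    by (rule lin_val_superset[OF fin]) auto
  moreover have "lin_val \<alpha> c' = (\<Sum>x\<in>?S. c' x * of_bool (\<alpha> x))"
    by (rule lin_val_superset[OF fin]) auto
  ultimately show ?thesis by (simp add: sum.distrib distrib_right)
qed

lemma lin_val_zero [simp]: "lin_val \<alpha> (\<lambda>_. 0) = 0"
  by (simp add: lin_val_def)

lemma lin_val_mult: "lin_val \<alpha> (\<lambda>x. k * c x) = k * lin_val \<alpha> c"
  by (cases "k = 0") (simp_all add: lin_val_def sum_distrib_left mult.assoc)

lemma lin_val_single: "lin_val \<alpha> (\<lambda>x. if x = y then a else 0) = a * of_bool (\<alpha> y)"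
  by (subst lin_val_superset[of "{y}"]) auto

text \<open>The form with nonnegative coefficients over literals, in which the division rule is stated.\<close>
lemma lin_val_lit_form:
  assumes fin: "finite {x. c x \<noteq> 0}"
  shows "lin_val \<alpha> c = (\<Sum>x | c x \<noteq> 0. \<bar>c x\<bar> * lit_val \<alpha> (if c x > 0 then Pos x else Neg x))
                        - (\<Sum>x | c x < 0. - c x)"
proof -
  let ?S = "{x. c x \<noteq> 0}"
  have "lin_val \<alpha> c = (\<Sum>x\<in>?S. \<bar>c x\<bar> * lit_val \<alpha> (if c x > 0 then Pos x else Neg x)
                                - (if c x < 0 then - c x else 0))"
    unfolding lin_val_def by (rule sum.cong) (auto simp: algebra_simps)
  also have "\<dots> = (\<Sum>x\<in>?S. \<bar>c x\<bar> * lit_val \<alpha> (if c x > 0 then Pos x else Neg x))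
                - (\<Sum>x | c x < 0. - c x)"
    using sum.inter_filter[OF fin, of "\<lambda>x. - c x" "\<lambda>x. c x < 0"]
    by (simp add: sum_subtractf Int_def conj_commute cong: conj_cong)
  finally show ?thesis .
qed

lemma ceil_div_le_iff:
  assumes "k > 0"
  shows "ceil_div a k \<le> x \<longleftrightarrow> a \<le> k * x"
proof
  assume "ceil_div a k \<le> x"
  then have "- x \<le> (- a) div k"
    by (simp add: ceil_div_def)
  then have "k * (- x) \<le> k * ((- a) div k)"
    by (rule mult_left_mono) (use assms in simp)
  also have "\<dots> \<le> - a"
    using assms mult_div_mod_eq[of k "- a"] pos_mod_sign[of k "- a"] by linarith
  finally show "a \<le> k * x" by simp
next
  assume "a \<le> k * x"
  have "- x = (k * (- x)) div k"
    using assms by (simp only: nonzero_mult_div_cancel_left less_irrefl)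
  also have "\<dots> \<le> (- a) div k"
    using \<open>a \<le> k * x\<close> assms by (intro zdiv_mono1) auto
  finally show "ceil_div a k \<le> x"
    using assms by (simp add: ceil_div_def)
qed

lemma ceil_div_pos: "k > 0 \<Longrightarrow> a > 0 \<Longrightarrow> ceil_div a k > 0"
  using ceil_div_le_iff[of k a 0] by simp

lemma lin_val_ceil_div_ge:
  assumes fin: "finite {x. c x \<noteq> 0}" and k: "k > 0" and d: "lin_val \<alpha> c \<ge> d"
  defines "N \<equiv> {x. c x < 0}"
  shows "lin_val \<alpha> (\<lambda>x. sgn (c x) * ceil_div \<bar>c x\<bar> k)
           \<ge> ceil_div (d + (\<Sum>x\<in>N. - c x)) k - (\<Sum>x\<in>N. ceil_div (- c x) k)"
proof -
  define q where "q x = ceil_div \<bar>c x\<bar> k" for x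
  define c' where "c' = (\<lambda>x. sgn (c x) * q x)"
  define b where "b x = lit_val \<alpha> (if c x > 0 then Pos x else Neg x)" for x
  have q_pos: "c x \<noteq> 0 \<Longrightarrow> q x > 0" for x
    using ceil_div_pos[OF k] by (simp add: q_def)
  have "c' x \<noteq> 0 \<longleftrightarrow> c x \<noteq> 0" for x
    using q_pos[of x] by (auto simp: c'_def sgn_if)
  then have supp: "{x. c' x \<noteq> 0} = {x. c x \<noteq> 0}"
    by simp
  have sign: "c' x > 0 \<longleftrightarrow> c x > 0" "c' x < 0 \<longleftrightarrow> c x < 0" for x
    using q_pos[of x] by (cases "c x" "0::int" rule: linorder_cases; simp add: c'_def)+
  have abs: "c x \<noteq> 0 \<Longrightarrow> \<bar>c' x\<bar> = q x" for x
    using q_pos[of x] by (auto simp: c'_def sgn_if)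
  have "k * (\<Sum>x | c x \<noteq> 0. q x * b x) \<ge> (\<Sum>x | c x \<noteq> 0. \<bar>c x\<bar> * b x)"
    unfolding sum_distrib_left
  proof (rule sum_mono)
    fix x
    have "b x \<ge> 0" using lit_val_cases by (auto simp: b_def)
    moreover have "\<bar>c x\<bar> \<le> k * q x" using ceil_div_le_iff[OF k, of "\<bar>c x\<bar>" "q x"] by (simp add: q_def)
    ultimately show "\<bar>c x\<bar> * b x \<le> k * (q x * b x)"
      by (simp add: mult_right_mono flip: mult.assoc)
  qed
  also have "(\<Sum>x | c x \<noteq> 0. \<bar>c x\<bar> * b x) = lin_val \<alpha> c + (\<Sum>x\<in>N. - c x)"
    using lin_val_lit_form[OF fin] by (simp add: b_def N_def)
  finally have "ceil_div (d + (\<Sum>x\<in>N. - c x)) k \<le> (\<Sum>x | c x \<noteq> 0. q x * b x)"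
    using d by (simp add: ceil_div_le_iff[OF k])
  moreover have "lin_val \<alpha> c' = (\<Sum>x | c x \<noteq> 0. q x * b x) - (\<Sum>x\<in>N. ceil_div (- c x) k)"
  proof -
    have "finite {x. c' x \<noteq> 0}" using fin supp by simp
    from lin_val_lit_form[OF this, of \<alpha>]
    have "lin_val \<alpha> c' = (\<Sum>x | c x \<noteq> 0. \<bar>c' x\<bar> * b x) - (\<Sum>x\<in>N. - c' x)"
      by (simp add: supp sign b_def N_def)
    also have "\<dots> = (\<Sum>x | c x \<noteq> 0. q x * b x) - (\<Sum>x\<in>N. ceil_div (- c x) k)"
      using abs by (auto simp: N_def c'_def q_def intro!: arg_cong2[where f = "(-)"] sum.cong)
    finally show ?thesis .
  qed
  ultimately show ?thesis by (simp add: c'_def q_def)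
qed

lemma norm_Cons_Pos:
  "norm (PBC ((a, Pos y) # ts) A)
     = (\<lambda>x. (if x = y then a else 0) + fst (norm (PBC ts A)) x, snd (norm (PBC ts A)))"
  by (auto simp: fun_eq_iff)

lemma norm_Cons_Neg:
  "norm (PBC ((a, Neg y) # ts) A)
     = (\<lambda>x. (if x = y then - a else 0) + fst (norm (PBC ts A)) x, snd (norm (PBC ts A)) - a)"
  by (auto simp: fun_eq_iff)

lemma norm_finite_lin_val:
  "finite {x. fst (norm (PBC ts A)) x \<noteq> 0} \<and>
   lin_val \<alpha> (fst (norm (PBC ts A))) - snd (norm (PBC ts A)) = lhs \<alpha> ts - A"
proof (induction ts)
  case Nil
  show ?case by simp
next
  case (Cons t ts)
  obtain a l where t: "t = (a, l)" by fastforce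
  obtain c d where cd: "norm (PBC ts A) = (c, d)" by fastforce
  have fin_c: "finite {x. c x \<noteq> 0}" and val: "lin_val \<alpha> c - d = lhs \<alpha> ts - A"
    using Cons.IH[unfolded cd fst_conv snd_conv] by simp_all
  have fin_single: "finite {x. (if x = y then b else 0) \<noteq> (0::int)}" for y b
    by (rule finite_subset[of _ "{y}"]) auto
  have fin: "finite {x. (if x = y then b else 0) + c x \<noteq> 0}" for y b
    by (rule finite_subset[of _ "{y} \<union> {x. c x \<noteq> 0}"]) (use fin_c in auto)
  show ?case
  proof (cases l)
    case (Pos y)
    then show ?thesis
      using norm_Cons_Pos[of a y ts A] lin_val_add[OF fin_single fin_c, of \<alpha>] lin_val_single[of \<alpha> y] fin val
      by (simp add: t cd del: norm.simps)
  next
    case (Neg y)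
    then show ?thesis
      using norm_Cons_Neg[of a y ts A] lin_val_add[OF fin_single fin_c, of \<alpha>] lin_val_single[of \<alpha> y] fin val
      by (simp add: t cd algebra_simps del: norm.simps)
  qed
qed

lemma sat_iff_norm:
  "finite {x. fst (norm D) x \<noteq> 0} \<and> (sat \<alpha> D \<longleftrightarrow> snd (norm D) \<le> lin_val \<alpha> (fst (norm D)))"
  using norm_finite_lin_val[of _ _ \<alpha>] by (cases D) (metis diff_ge_0_iff_ge sat.simps)

lemma cp_sound:
  "cp G p \<Longrightarrow> finite {x. fst p x \<noteq> 0} \<and> (sat_set \<alpha> G \<longrightarrow> snd p \<le> lin_val \<alpha> (fst p))"
proof (induction p rule: cp.induct)
  case (cp_ax C)
  then show ?case using sat_iff_norm[of C \<alpha>] by (auto simp: sat_set_def)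
next
  case (cp_pos x)
  show ?case using lin_val_single[of \<alpha> x 1] by (auto simp: eq_commute[of x])
next
  case (cp_negl x)
  show ?case using lin_val_single[of \<alpha> x "-1"] by (auto simp: eq_commute[of x])
next
  case (cp_add c d c' d')
  have "{x. c x + c' x \<noteq> 0} \<subseteq> {x. c x \<noteq> 0} \<union> {x. c' x \<noteq> 0}" by auto
  then show ?case using cp_add.IH lin_val_add[of c c' \<alpha>] by (auto intro: finite_subset)
next
  case (cp_mult c d k)
  then show ?case by (auto simp: lin_val_mult)
next
  case (cp_div c d k)
  have "{x. sgn (c x) * ceil_div \<bar>c x\<bar> k \<noteq> 0} \<subseteq> {x. c x \<noteq> 0}" by auto
  then show ?case
    using cp_div lin_val_ceil_div_ge[OF _ cp_div.hyps(2)] by (auto intro: finite_subset)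
qed

lemma derives_sound: "derives G D \<Longrightarrow> sat_set \<alpha> G \<Longrightarrow> sat \<alpha> D"
  unfolding derives_def
  using cp_sound[of G "norm D" \<alpha>] sat_iff_norm[of D \<alpha>]
    cp_sound[of "G \<union> {neg D}" "(\<lambda>_. 0, 1)" \<alpha>]
  by (auto simp: sat_neg_iff)

lemma derives_set_sound: "derives_set G H \<Longrightarrow> sat_set \<alpha> G \<Longrightarrow> sat_set \<alpha> H"
  by (auto simp: derives_set_def sat_set_def intro: derives_sound[unfolded sat_set_def])

lemma preceq_f_trans:
  assumes "is_preorder_encoding Oenc z"
    and "preceq_f Oenc z f \<alpha> \<beta>" and "preceq_f Oenc z f \<beta> \<gamma>"
  shows "preceq_f Oenc z f \<alpha> \<gamma>"
  using assms unfolding preceq_f_def is_preorder_encoding_def by fastforce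

lemma redundance_witness:
  assumes enc: "is_preorder_encoding Oenc z"
    and der: "derives_set (\<C> \<union> \<D> \<union> obj_le_ext f w \<union> {neg C})
                (subst_set \<omega> (\<C> \<union> \<D> \<union> {C}) \<union> {obj_subst_le \<omega> f} \<union> enc_subst Oenc z \<omega>)"
    and \<rho>: "sat_set \<rho> (\<C> \<union> \<D> \<union> obj_le_ext f w)"
  shows "\<exists>\<rho>'. preceq_f Oenc z f \<rho>' \<rho> \<and> sat_set \<rho>' (\<C> \<union> (\<D> \<union> {C}) \<union> obj_le_ext f w)"
proof (cases "sat \<rho> C")
  case True
  have "preceq_f Oenc z f \<rho> \<rho>"
    using enc by (simp add: preceq_f_def is_preorder_encoding_def)
  with True \<rho> show ?thesis by auto
next
  case False
  let ?\<rho>' = "subst_asg \<rho> \<omega>"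
  have "sat_set \<rho> (subst_set \<omega> (\<C> \<union> \<D> \<union> {C}) \<union> {obj_subst_le \<omega> f} \<union> enc_subst Oenc z \<omega>)"
    using derives_set_sound[OF der] \<rho> False by (simp add: sat_neg_iff)
  then have sat': "sat_set ?\<rho>' (\<C> \<union> \<D> \<union> {C})"
    and obj: "obj_val ?\<rho>' f \<le> obj_val \<rho> f"
    and ord: "enc_holds Oenc z ?\<rho>' \<rho>"
    by (simp_all add: sat_set_subst_set_iff sat_obj_subst_le_iff sat_set_enc_subst_iff)
  have "sat_set ?\<rho>' (obj_le_ext f w)"
    using sat_set_obj_le_ext_mono[OF obj] \<rho> by simp
  with sat' obj ord show ?thesis
    by (auto simp: preceq_f_def)
qed

lemma weakly_valid_add_redundant:
  assumes enc: "is_preorder_encoding Oenc z"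
    and der: "derives_set (\<C> \<union> \<D> \<union> obj_le_ext f (eint_dec v) \<union> {neg C})
                (subst_set \<omega> (\<C> \<union> \<D> \<union> {C}) \<union> {obj_subst_le \<omega> f} \<union> enc_subst Oenc z \<omega>)"
    and wv: "weakly_valid F f \<C> \<D> Oenc z v"
  shows "weakly_valid F f \<C> (\<D> \<union> {C}) Oenc z v"
  unfolding weakly_valid_def
proof (intro conjI allI impI)
  fix v' assume "eint_less v' v" "satisfiable (F \<union> {obj_le f v'})"
  then show "satisfiable (\<C> \<union> {obj_le f v'})"
    using wv by (simp add: weakly_valid_def)
next
  fix \<rho> assume "sat_set \<rho> (\<C> \<union> obj_le_ext f (eint_dec v))"
  then obtain \<rho>1 where \<rho>1: "preceq_f Oenc z f \<rho>1 \<rho>"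
    and sat1: "sat_set \<rho>1 (\<C> \<union> \<D> \<union> obj_le_ext f (eint_dec v))"
    using wv by (auto simp: weakly_valid_def)
  obtain \<rho>2 where "preceq_f Oenc z f \<rho>2 \<rho>1"
    and "sat_set \<rho>2 (\<C> \<union> (\<D> \<union> {C}) \<union> obj_le_ext f (eint_dec v))"
    using redundance_witness[OF enc der sat1] by blast
  with \<rho>1 show "\<exists>\<rho>'. preceq_f Oenc z f \<rho>' \<rho> \<and>
      sat_set \<rho>' (\<C> \<union> (\<D> \<union> {C}) \<union> obj_le_ext f (eint_dec v))"
    using preceq_f_trans[OF enc] by blast
qed

theorem mainTheorem4:
  fixes F \<C> \<D> :: "'v pbc set" and f :: "'v obj" and Oenc :: penc and z :: "'v list"
    and v :: eint and C :: "'v pbc" and \<omega> :: "'v \<Rightarrow> 'v slit"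
  assumes enc: "is_preorder_encoding Oenc z"
    and der: "derives_set (\<C> \<union> \<D> \<union> obj_le_ext f (eint_dec v) \<union> {neg C})
                (subst_set \<omega> (\<C> \<union> \<D> \<union> {C}) \<union> {obj_subst_le \<omega> f} \<union> enc_subst Oenc z \<omega>)"
  shows "(weakly_valid F f \<C> \<D> Oenc z v \<longrightarrow> weakly_valid F f \<C> (\<D> \<union> {C}) Oenc z v) \<and>
         (valid F f \<C> \<D> Oenc z v \<longrightarrow> valid F f \<C> (\<D> \<union> {C}) Oenc z v)"
  using weakly_valid_add_redundant[OF enc der] by (auto simp: valid_def)

end
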